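(* Let ${\cal G}$ be a closed graph, $\nu>2$, and $f\in C^1_{\rm Dir}({\cal G})$ with $\int f\,d{\cal V}=0$. Then $$\|\nabla f\|_2\ge\bigl(\widetilde I_\nu({\cal G})\rho_{\sup}^{-1/2}/2\bigr)\,\|f\|_2^{1+(2/\nu)}\,\|f\|_1^{-2/\nu}.$$
   Context: A closed graph ${\cal G}$ consists of a finite undirected graph $(V,E)$ (multiple edges, self-loops allowed), edge lengths $\ell_e>0$, empty boundary, a vertex measure ${\cal V}$ (supported on $V$, ${\cal V}(v)>0$) and an edge measure ${\cal E}$ (zero on vertices, $a_e>0$ times Lebesgue measure on the interior of edge $e$); ${\cal G}$ is identified with its geometric realization (closed interval of length $\ell_e$ joining the endpoints of each $e$). $C^1_{\rm Dir}({\cal G})$: continuous functions, uniformly continuously differentiable on each open edge. $\|f\|_q$ are $L^q({\cal V})$ norms; $\|\nabla f\|_2$ is the $L^2({\cal E})$ norm of $|\nabla f|$. $\rho_{\sup}=\max_v{\cal V}(v)^{-1}\sum_{e\ni v}{\cal E}(e)/2$. For open $\Omega$ with finite boundary, ${\cal A}(\partial\Omega)=\sum_{x\in\partial\Omega\setminus V}a_{e(x)}+\sum_{v\in\partial\Omega\cap V}\sum_{e:\,v\in\overline{\Omega\cap e^\circ}}a_e$ ($e(x)$ the edge containing $x$, $e^\circ$ open interior of $e$). $\widetilde I_\nu({\cal G})=\inf_\Omega{\cal A}(\partial\Omega)\min({\cal V}(\Omega),{\cal V}(\complement\Omega))^{(1/\nu)-1}$ over open $\Omega$ with finite boundary. 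*)

theory Defs
  imports "HOL-Analysis.Analysis"
begin

text \<open>Combinatorial data of a closed graph: vertex set, edge set, endpoints of
  each edge (multiple edges and self-loops allowed), edge lengths, vertex
  measure weights and edge-measure densities a_e.\<close>
record ('v, 'e) cgraph =
  verts :: "'v set"
  edges :: "'e set"
  src   :: "'e \<Rightarrow> 'v"
  tgt   :: "'e \<Rightarrow> 'v"
  len   :: "'e \<Rightarrow> real"
  vmeas :: "'v \<Rightarrow> real"
  ewt   :: "'e \<Rightarrow> real"

definition closed_graph :: "('v, 'e) cgraph \<Rightarrow> bool" where
  "closed_graph G \<longleftrightarrow> finite (verts G) \<and> finite (edges G) \<and>
     (\<forall>e\<in>edges G. src G e \<in> verts G \<and> tgt G e \<in> verts G \<and> 0 < len G e \<and> 0 < ewt G e) \<and>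
     (\<forall>v\<in>verts G. 0 < vmeas G v)"

text \<open>Points of the geometric realization: vertices, and interior points of edges
  (EPt e t with 0 < t < len e).\<close>
datatype ('v, 'e) gpoint = Vtx 'v | EPt 'e real

definition gcarrier :: "('v, 'e) cgraph \<Rightarrow> ('v, 'e) gpoint set" where
  "gcarrier G = Vtx ` verts G \<union> {EPt e t | e t. e \<in> edges G \<and> 0 < t \<and> t < len G e}"

definition eparam :: "('v, 'e) cgraph \<Rightarrow> 'e \<Rightarrow> real \<Rightarrow> ('v, 'e) gpoint" where
  "eparam G e t = (if t = 0 then Vtx (src G e) else if t = len G e then Vtx (tgt G e) else EPt e t)"

definition gopen :: "('v, 'e) cgraph \<Rightarrow> ('v, 'e) gpoint set \<Rightarrow> bool" where
  "gopen G S \<longleftrightarrow> S \<subseteq> gcarrier G \<and>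
     (\<forall>e\<in>edges G. openin (top_of_set {0..len G e}) {t \<in> {0..len G e}. eparam G e t \<in> S})"

definition gtop :: "('v, 'e) cgraph \<Rightarrow> ('v, 'e) gpoint topology" where
  "gtop G = topology (gopen G)"

definition edge_interior :: "('v, 'e) cgraph \<Rightarrow> 'e \<Rightarrow> ('v, 'e) gpoint set" where
  "edge_interior G e = {EPt e t | t. 0 < t \<and> t < len G e}"

definition vol :: "('v, 'e) cgraph \<Rightarrow> ('v, 'e) gpoint set \<Rightarrow> real" where
  "vol G S = (\<Sum>v\<in>{v \<in> verts G. Vtx v \<in> S}. vmeas G v)"

definition bdry_weight :: "('v, 'e) cgraph \<Rightarrow> ('v, 'e) gpoint set \<Rightarrow> real" where
  "bdry_weight G \<Omega> =
     (\<Sum>(e, t)\<in>{(e, t). EPt e t \<in> gtop G frontier_of \<Omega>}. ewt G e) +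
     (\<Sum>v\<in>{v \<in> verts G. Vtx v \<in> gtop G frontier_of \<Omega>}.
        \<Sum>e\<in>{e \<in> edges G. Vtx v \<in> gtop G closure_of (\<Omega> \<inter> edge_interior G e)}. ewt G e)"

text \<open>Isoperimetric constant; sets with min(V(\<Omega>), V(complement)) = 0 contribute +\<infinity>
  and are hence omitted.\<close>
definition iso_const :: "('v, 'e) cgraph \<Rightarrow> real \<Rightarrow> real" where
  "iso_const G \<nu> = Inf {bdry_weight G \<Omega> * min (vol G \<Omega>) (vol G (gcarrier G - \<Omega>)) powr (1 / \<nu> - 1) | \<Omega>.
       openin (gtop G) \<Omega> \<and> finite (gtop G frontier_of \<Omega>) \<and>
       0 < min (vol G \<Omega>) (vol G (gcarrier G - \<Omega>))}"

definition rho_sup :: "('v, 'e) cgraph \<Rightarrow> real" where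
  "rho_sup G = Max ((\<lambda>v. (\<Sum>e\<in>{e \<in> edges G. src G e = v \<or> tgt G e = v}. ewt G e * len G e / 2) / vmeas G v)
                     ` verts G)"

definition C1_Dir :: "('v, 'e) cgraph \<Rightarrow> (('v, 'e) gpoint \<Rightarrow> real) \<Rightarrow> bool" where
  "C1_Dir G f \<longleftrightarrow> continuous_map (gtop G) euclideanreal f \<and>
     (\<forall>e\<in>edges G. \<exists>f'. (\<forall>t\<in>{0<..<len G e}. ((\<lambda>s. f (EPt e s)) has_real_derivative f' t) (at t)) \<and>
                        uniformly_continuous_on {0<..<len G e} f')"

definition grad_norm2 :: "('v, 'e) cgraph \<Rightarrow> (('v, 'e) gpoint \<Rightarrow> real) \<Rightarrow> real" where
  "grad_norm2 G f = sqrt (\<Sum>e\<in>edges G. ewt G e *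
       integral {0<..<len G e} (\<lambda>t. (deriv (\<lambda>s. f (EPt e s)) t)\<^sup>2))"

definition vnorm :: "('v, 'e) cgraph \<Rightarrow> real \<Rightarrow> (('v, 'e) gpoint \<Rightarrow> real) \<Rightarrow> real" where
  "vnorm G q f = (\<Sum>v\<in>verts G. vmeas G v * \<bar>f (Vtx v)\<bar> powr q) powr (1 / q)"

end

theory Submission
  imports Defs
begin

text \<open>
  On every edge the Dirichlet energy dominates a_e (f(t) - f(s))^2 / l_e (fundamental theorem of
  calculus and Cauchy-Schwarz), so it suffices to prove the inequality for the vertex values x of f,
  a function of mean zero. Shifting x by a weighted median c does not increase the L^1 norm and,
  because x has mean zero, does not decrease the L^2 norm. For h = x - c the functions (h^+)^2 and
  (h^-)^2 are supported on at most half of the volume, so for them a discrete layer-cake argument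
  gives I * \<Sum> V H \<psi> \<le> ||\<psi>||_\<nu> * \<Sum> a_e |H(s) - H(t)|: each layer is a vertex set S, and the
  superlevel set {\<phi> > 1/2} of the piecewise linear extension \<phi> of its indicator is an admissible
  open set whose boundary weight is at most the weight of the edges cut by S. Taking
  \<psi> = |h|^(1/\<nu>), bounding the edge sum by Cauchy-Schwarz (this is where \<rho>_sup enters) and
  interpolating the L^2 norm of h between its L^1 norm and its (2 + 1/\<nu>)-th moment by Hoelder
  gives the discrete inequality.
\<close>

section \<open>Inequalities for finite weighted sums\<close>

lemma Hoelder_inequality_sum:
  fixes w a b :: "'a \<Rightarrow> real"
  assumes fin: "finite A" and w: "\<And>i. i \<in> A \<Longrightarrow> 0 \<le> w i"
    and a: "\<And>i. i \<in> A \<Longrightarrow> 0 \<le> a i" and b: "\<And>i. i \<in> A \<Longrightarrow> 0 \<le> b i"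
    and r: "r > 1" and s: "s > 1" and rs: "1/r + 1/s = 1"
  shows "(\<Sum>i\<in>A. w i * a i * b i)
    \<le> (\<Sum>i\<in>A. w i * a i powr r) powr (1/r) * (\<Sum>i\<in>A. w i * b i powr s) powr (1/s)"
proof -
  define P where "P = (\<Sum>i\<in>A. w i * a i powr r)"
  define R where "R = (\<Sum>i\<in>A. w i * b i powr s)"
  have "P \<ge> 0" "R \<ge> 0"
    unfolding P_def R_def using w by (auto intro: sum_nonneg)
  show ?thesis
  proof (cases "P = 0 \<or> R = 0")
    case True
    then have "\<forall>i\<in>A. w i * a i powr r = 0 \<or> w i * b i powr s = 0"
      unfolding P_def R_def using w by (auto simp: sum_nonneg_eq_0_iff[OF fin])
    then have "(\<Sum>i\<in>A. w i * a i * b i) = 0"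
      using r s by (intro sum.neutral) auto
    then show ?thesis
      using \<open>P \<ge> 0\<close> \<open>R \<ge> 0\<close> unfolding P_def R_def by simp
  next
    case False
    then have "P > 0" "R > 0"
      using \<open>P \<ge> 0\<close> \<open>R \<ge> 0\<close> by auto
    define \<alpha> where "\<alpha> = P powr (1/r)"
    define \<beta> where "\<beta> = R powr (1/s)"
    have "\<alpha> > 0" "\<beta> > 0" "\<alpha> powr r = P" "\<beta> powr s = R"
      using \<open>P > 0\<close> \<open>R > 0\<close> r s by (auto simp: \<alpha>_def \<beta>_def powr_powr)
    have "(\<Sum>i\<in>A. w i * ((a i / \<alpha>) * (b i / \<beta>)))
        \<le> (\<Sum>i\<in>A. w i * ((a i / \<alpha>) powr r / r + (b i / \<beta>) powr s / s))"
      using w a b \<open>\<alpha> > 0\<close> \<open>\<beta> > 0\<close>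
      by (intro sum_mono mult_left_mono Youngs_inequality[OF r s rs]) auto
    also have "\<dots> = (\<Sum>i\<in>A. w i * a i powr r) / (P * r) + (\<Sum>i\<in>A. w i * b i powr s) / (R * s)"
      using a b \<open>\<alpha> > 0\<close> \<open>\<beta> > 0\<close>
      by (simp add: powr_divide \<open>\<alpha> powr r = P\<close> \<open>\<beta> powr s = R\<close> sum_divide_distrib sum.distrib
          algebra_simps)
    also have "\<dots> = 1"
      using \<open>P > 0\<close> \<open>R > 0\<close> rs unfolding P_def[symmetric] R_def[symmetric] by (simp add: field_simps)
    finally have "(\<Sum>i\<in>A. w i * a i * b i) / (\<alpha> * \<beta>) \<le> 1"
      by (simp add: sum_divide_distrib algebra_simps)
    then show ?thesis
      using \<open>\<alpha> > 0\<close> \<open>\<beta> > 0\<close> by (simp add: divide_le_eq \<alpha>_def \<beta>_def P_def R_def)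
  qed
qed

lemma sum_sq_powr_le_interpolation:
  fixes w h :: "'a \<Rightarrow> real"
  assumes fin: "finite A" and w: "\<And>i. i \<in> A \<Longrightarrow> 0 \<le> w i" and \<nu>: "\<nu> > 0"
  shows "(\<Sum>i\<in>A. w i * (h i)\<^sup>2) powr ((\<nu> + 1) / \<nu>)
    \<le> (\<Sum>i\<in>A. w i * \<bar>h i\<bar> powr (2 + 1/\<nu>)) * (\<Sum>i\<in>A. w i * \<bar>h i\<bar>) powr (1/\<nu>)"
proof -
  define T where "T = (\<Sum>i\<in>A. w i * \<bar>h i\<bar> powr (2 + 1/\<nu>))"
  define N where "N = (\<Sum>i\<in>A. w i * \<bar>h i\<bar>)"
  have "T \<ge> 0"
    unfolding T_def using w by (auto intro: sum_nonneg)
  have exps: "(\<nu> + 1) / \<nu> > 1" "\<nu> + 1 > 1" "1 / ((\<nu> + 1) / \<nu>) + 1 / (\<nu> + 1) = 1"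
    using \<nu> by (auto simp: field_simps)
  define p where "p = (2 * \<nu> + 1) / (\<nu> + 1)"
  define q where "q = 1 / (\<nu> + 1)"
  have "p + q = 2" "p * ((\<nu> + 1) / \<nu>) = 2 + 1/\<nu>" "q * (\<nu> + 1) = 1"
    using \<nu> by (simp_all add: p_def q_def divide_simps)
  then have split_sq: "\<bar>h i\<bar> powr p * \<bar>h i\<bar> powr q = (h i)\<^sup>2"
    and p_power: "(\<bar>h i\<bar> powr p) powr ((\<nu> + 1) / \<nu>) = \<bar>h i\<bar> powr (2 + 1/\<nu>)"
    and q_power: "(\<bar>h i\<bar> powr q) powr (\<nu> + 1) = \<bar>h i\<bar>" for i
    by (simp_all add: powr_powr flip: powr_add)
  have holder: "(\<Sum>i\<in>A. w i * \<bar>h i\<bar> powr p * \<bar>h i\<bar> powr q)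
      \<le> (\<Sum>i\<in>A. w i * (\<bar>h i\<bar> powr p) powr ((\<nu> + 1) / \<nu>)) powr (1/((\<nu> + 1) / \<nu>))
        * (\<Sum>i\<in>A. w i * (\<bar>h i\<bar> powr q) powr (\<nu> + 1)) powr (1/(\<nu> + 1))"
    by (rule Hoelder_inequality_sum[OF fin w _ _ exps]) auto
  have "(\<Sum>i\<in>A. w i * (h i)\<^sup>2) \<le> T powr (\<nu> / (\<nu> + 1)) * N powr (1 / (\<nu> + 1))"
    using holder unfolding mult.assoc split_sq p_power q_power by (simp add: T_def N_def)
  then have "(\<Sum>i\<in>A. w i * (h i)\<^sup>2) powr ((\<nu> + 1) / \<nu>)
      \<le> (T powr (\<nu> / (\<nu> + 1)) * N powr (1 / (\<nu> + 1))) powr ((\<nu> + 1) / \<nu>)"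
    using w \<nu> by (intro powr_mono2) (auto intro!: sum_nonneg)
  also have "\<dots> = T * N powr (1/\<nu>)"
    using \<nu> \<open>T \<ge> 0\<close> by (simp add: powr_mult powr_powr)
  finally show ?thesis
    unfolding T_def N_def .
qed

lemma sum_le_measure_powr_norm:
  fixes w \<psi> :: "'a \<Rightarrow> real"
  assumes fin: "finite A" and B: "B \<subseteq> A" and w: "\<And>i. i \<in> A \<Longrightarrow> 0 \<le> w i"
    and \<psi>: "\<And>i. i \<in> A \<Longrightarrow> 0 \<le> \<psi> i" and \<nu>: "\<nu> > 1"
  shows "(\<Sum>i\<in>B. w i * \<psi> i) \<le> (\<Sum>i\<in>B. w i) powr (1 - 1/\<nu>) * (\<Sum>i\<in>A. w i * \<psi> i powr \<nu>) powr (1/\<nu>)"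
proof -
  have finB: "finite B"
    using fin B by (rule finite_subset[rotated])
  have exps: "\<nu> / (\<nu> - 1) > 1" "1 / (\<nu> / (\<nu> - 1)) + 1 / \<nu> = 1" "1 / (\<nu> / (\<nu> - 1)) = 1 - 1/\<nu>"
    using \<nu> by (auto simp: field_simps)
  have "(\<Sum>i\<in>B. w i * 1 * \<psi> i)
      \<le> (\<Sum>i\<in>B. w i * 1 powr (\<nu> / (\<nu> - 1))) powr (1 - 1/\<nu>) * (\<Sum>i\<in>B. w i * \<psi> i powr \<nu>) powr (1/\<nu>)"
    using Hoelder_inequality_sum[OF finB _ _ _ exps(1) \<nu> exps(2), of w "\<lambda>_. 1" \<psi>] w \<psi> B
    unfolding exps(3) by auto
  also have "\<dots> \<le> (\<Sum>i\<in>B. w i) powr (1 - 1/\<nu>) * (\<Sum>i\<in>A. w i * \<psi> i powr \<nu>) powr (1/\<nu>)"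
    using w \<psi> B \<nu> by (auto intro!: mult_left_mono powr_mono2 sum_mono2 fin sum_nonneg)
  finally show ?thesis
    by simp
qed

lemma weighted_median_exists:
  fixes w x :: "'a \<Rightarrow> real"
  assumes fin: "finite A" and ne: "A \<noteq> {}" and w: "\<And>v. v \<in> A \<Longrightarrow> 0 \<le> w v"
  obtains c where "2 * (\<Sum>v\<in>{v\<in>A. x v > c}. w v) \<le> (\<Sum>v\<in>A. w v)"
    and "2 * (\<Sum>v\<in>{v\<in>A. x v < c}. w v) \<le> (\<Sum>v\<in>A. w v)"
proof -
  define W where "W = (\<Sum>v\<in>A. w v)"
  define T where "T = {y \<in> x ` A. W \<le> 2 * (\<Sum>v\<in>{v\<in>A. x v \<le> y}. w v)}"
  define c where "c = Min T"
  have "W \<ge> 0"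
    unfolding W_def using w by (simp add: sum_nonneg)
  have "{v\<in>A. x v \<le> Max (x ` A)} = A"
    using fin by auto
  then have "Max (x ` A) \<in> T"
    using fin ne \<open>W \<ge> 0\<close> unfolding T_def W_def by auto
  moreover have "finite T"
    using fin by (simp add: T_def)
  ultimately have "c \<in> T" and c_least: "\<And>y. y \<in> T \<Longrightarrow> c \<le> y"
    unfolding c_def by (auto intro: Min_in)
  have "W = (\<Sum>v\<in>{v\<in>A. x v > c}. w v) + (\<Sum>v\<in>{v\<in>A. x v \<le> c}. w v)"
    unfolding W_def using fin by (subst sum.union_disjoint[symmetric]) (auto intro: sum.cong)
  then have above: "2 * (\<Sum>v\<in>{v\<in>A. x v > c}. w v) \<le> W"
    using \<open>c \<in> T\<close> unfolding T_def by auto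
  have below: "2 * (\<Sum>v\<in>{v\<in>A. x v < c}. w v) \<le> W"
  proof (rule ccontr)
    assume less: "\<not> ?thesis"
    define L where "L = {v\<in>A. x v < c}"
    have "L \<noteq> {}"
    proof
      assume "L = {}"
      then have "(\<Sum>v\<in>{v\<in>A. x v < c}. w v) = 0"
        by (simp add: L_def[symmetric])
      with less \<open>W \<ge> 0\<close> show False
        by simp
    qed
    moreover have "finite L"
      using fin by (simp add: L_def)
    ultimately have y: "Max (x ` L) \<in> x ` L"
      by simp
    then have "Max (x ` L) < c"
      by (auto simp: L_def)
    moreover have "{v\<in>A. x v \<le> Max (x ` L)} = L"
      using \<open>finite L\<close> \<open>Max (x ` L) < c\<close> by (auto simp: L_def)
    then have "Max (x ` L) \<in> T"
      using less y unfolding T_def L_def by auto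
    ultimately show False
      using c_least by fastforce
  qed
  show ?thesis
    using that above below unfolding W_def .
qed

lemma weighted_abs_dev_median_le:
  fixes w x :: "'a \<Rightarrow> real"
  assumes fin: "finite A" and w: "\<And>v. v \<in> A \<Longrightarrow> 0 \<le> w v"
    and above: "2 * (\<Sum>v\<in>{v\<in>A. x v > c}. w v) \<le> (\<Sum>v\<in>A. w v)"
    and below: "2 * (\<Sum>v\<in>{v\<in>A. x v < c}. w v) \<le> (\<Sum>v\<in>A. w v)"
  shows "(\<Sum>v\<in>A. w v * \<bar>x v - c\<bar>) \<le> (\<Sum>v\<in>A. w v * \<bar>x v\<bar>)"
proof -
  have nonneg_case: "(\<Sum>v\<in>A. w v * \<bar>y v - d\<bar>) \<le> (\<Sum>v\<in>A. w v * \<bar>y v\<bar>)"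
    if "0 \<le> d" and "2 * (\<Sum>v\<in>{v\<in>A. y v < d}. w v) \<le> (\<Sum>v\<in>A. w v)" for y d
  proof -
    let ?Lo = "{v\<in>A. y v < d}" and ?Hi = "{v\<in>A. \<not> y v < d}"
    have split: "(\<Sum>v\<in>A. f v) = (\<Sum>v\<in>?Lo. f v) + (\<Sum>v\<in>?Hi. f v)" for f :: "'a \<Rightarrow> real"
      using fin by (subst sum.union_disjoint[symmetric]) (auto intro: sum.cong)
    have "(\<Sum>v\<in>A. if y v < d then w v * d else w v * - d)
        = (\<Sum>v\<in>?Lo. w v * d) + (\<Sum>v\<in>?Hi. w v * - d)"
      unfolding sum.If_cases[OF fin] by (intro arg_cong2[where f="(+)"] sum.cong) auto
    also have "\<dots> = d * ((\<Sum>v\<in>?Lo. w v) - (\<Sum>v\<in>?Hi. w v))"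
      by (simp add: sum_distrib_left sum_subtractf sum_negf algebra_simps)
    finally have shift: "(\<Sum>v\<in>A. if y v < d then w v * d else w v * - d)
        = d * ((\<Sum>v\<in>?Lo. w v) - (\<Sum>v\<in>?Hi. w v))" .
    have "(\<Sum>v\<in>A. w v * \<bar>y v - d\<bar>) \<le> (\<Sum>v\<in>A. w v * (\<bar>y v\<bar> + (if y v < d then d else - d)))"
      using w \<open>0 \<le> d\<close> by (intro sum_mono mult_left_mono) auto
    also have "\<dots> = (\<Sum>v\<in>A. w v * \<bar>y v\<bar>) + (\<Sum>v\<in>A. if y v < d then w v * d else w v * - d)"
      by (subst sum.distrib[symmetric]) (auto intro: sum.cong simp: algebra_simps)
    also have "\<dots> \<le> (\<Sum>v\<in>A. w v * \<bar>y v\<bar>)"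
      using that split[of w] by (simp add: shift mult_nonneg_nonpos)
    finally show ?thesis .
  qed
  show ?thesis
  proof (cases "0 \<le> c")
    case True
    then show ?thesis
      using nonneg_case below by blast
  next
    case False
    \<comment> \<open>reflect: the median of -x is -c \<ge> 0\<close>
    have "(\<Sum>v\<in>A. w v * \<bar>- x v - - c\<bar>) \<le> (\<Sum>v\<in>A. w v * \<bar>- x v\<bar>)"
      using False above by (intro nonneg_case) auto
    then show ?thesis
      by (simp add: abs_minus_commute)
  qed
qed

lemma weighted_sq_dev_ge_of_mean_zero:
  fixes w x :: "'a \<Rightarrow> real"
  assumes w: "\<And>v. v \<in> A \<Longrightarrow> 0 \<le> w v" and mean: "(\<Sum>v\<in>A. w v * x v) = 0"
  shows "(\<Sum>v\<in>A. w v * (x v)\<^sup>2) \<le> (\<Sum>v\<in>A. w v * (x v - c)\<^sup>2)"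
proof -
  have "(\<Sum>v\<in>A. w v * (x v - c)\<^sup>2)
      = (\<Sum>v\<in>A. w v * (x v)\<^sup>2) - 2 * c * (\<Sum>v\<in>A. w v * x v) + c\<^sup>2 * (\<Sum>v\<in>A. w v)"
    by (simp add: power2_diff sum.distrib sum_subtractf sum_distrib_left sum_distrib_right algebra_simps)
  moreover have "0 \<le> c\<^sup>2 * (\<Sum>v\<in>A. w v)"
    using w by (simp add: sum_nonneg)
  ultimately show ?thesis
    using mean by simp
qed

lemma pos_neg_part_sq_diff_le:
  fixes a b :: real
  shows "\<bar>(max a 0)\<^sup>2 - (max b 0)\<^sup>2\<bar> + \<bar>(max (-a) 0)\<^sup>2 - (max (-b) 0)\<^sup>2\<bar> \<le> \<bar>a - b\<bar> * (\<bar>a\<bar> + \<bar>b\<bar>)"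
proof -
  have sq: "\<bar>p\<^sup>2 - q\<^sup>2\<bar> = \<bar>p - q\<bar> * \<bar>p + q\<bar>" for p q :: real
    by (simp add: power2_eq_square algebra_simps flip: abs_mult)
  consider "a \<ge> 0" "b \<ge> 0" | "a \<ge> 0" "b < 0" | "a < 0" "b \<ge> 0" | "a < 0" "b < 0"
    by linarith
  then show ?thesis
  proof cases
    case 1
    then show ?thesis using sq[of a b] by (simp add: max_def)
  next
    case 2
    then show ?thesis using mult_nonneg_nonpos[of a b]
      by (simp add: max_def power2_eq_square algebra_simps abs_if)
  next
    case 3
    then show ?thesis using mult_nonpos_nonneg[of a b]
      by (simp add: max_def power2_eq_square algebra_simps abs_if)
  next
    case 4
    then show ?thesis using sq[of "-a" "-b"] by (simp add: max_def abs_minus_commute add.commute)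
  qed
qed

section \<open>The topology of the geometric realization\<close>

lemma istopology_gopen: "istopology (gopen G)"
  unfolding istopology_def gopen_def
proof (intro conjI allI impI ballI)
  fix S T
  assume "S \<subseteq> gcarrier G \<and> (\<forall>e\<in>edges G. openin (top_of_set {0..len G e}) {t \<in> {0..len G e}. eparam G e t \<in> S})"
    and "T \<subseteq> gcarrier G \<and> (\<forall>e\<in>edges G. openin (top_of_set {0..len G e}) {t \<in> {0..len G e}. eparam G e t \<in> T})"
  moreover have "{t \<in> {0..len G e}. eparam G e t \<in> S \<inter> T}
      = {t \<in> {0..len G e}. eparam G e t \<in> S} \<inter> {t \<in> {0..len G e}. eparam G e t \<in> T}" for e
    by blast
  ultimately show "S \<inter> T \<subseteq> gcarrier G"
    and "e \<in> edges G \<Longrightarrow> openin (top_of_set {0..len G e}) {t \<in> {0..len G e}. eparam G e t \<in> S \<inter> T}" for e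
    by (auto simp: openin_Int)
next
  fix K
  assume "\<forall>S\<in>K. S \<subseteq> gcarrier G \<and>
    (\<forall>e\<in>edges G. openin (top_of_set {0..len G e}) {t \<in> {0..len G e}. eparam G e t \<in> S})"
  moreover have "{t \<in> {0..len G e}. eparam G e t \<in> \<Union>K} = (\<Union>S\<in>K. {t \<in> {0..len G e}. eparam G e t \<in> S})" for e
    by blast
  ultimately show "\<Union>K \<subseteq> gcarrier G"
    and "e \<in> edges G \<Longrightarrow> openin (top_of_set {0..len G e}) {t \<in> {0..len G e}. eparam G e t \<in> \<Union>K}" for e
    by auto
qed

lemma openin_gtop: "openin (gtop G) = gopen G"
  by (simp add: gtop_def istopology_gopen)

lemma eparam_in_gcarrier:
  assumes "closed_graph G" "e \<in> edges G" "t \<in> {0..len G e}"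
  shows "eparam G e t \<in> gcarrier G"
  using assms unfolding closed_graph_def eparam_def gcarrier_def by auto

lemma topspace_gtop:
  assumes "closed_graph G"
  shows "topspace (gtop G) = gcarrier G"
proof -
  have "{t \<in> {0..len G e}. eparam G e t \<in> gcarrier G} = topspace (top_of_set {0..len G e})"
    if "e \<in> edges G" for e
    using eparam_in_gcarrier[OF assms that] by auto
  then have "gopen G (gcarrier G)"
    by (auto simp: gopen_def simp del: topspace_euclidean_subtopology)
  then show ?thesis
    unfolding topspace_def openin_gtop by (auto simp: gopen_def)
qed

lemma openin_gtop_preimage:
  assumes G: "closed_graph G" and "open U"
    and "\<And>e. e \<in> edges G \<Longrightarrow> continuous_on {0..len G e} (\<lambda>t. \<phi> (eparam G e t))"
  shows "openin (gtop G) {p \<in> gcarrier G. \<phi> p \<in> U}"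
  unfolding openin_gtop gopen_def
proof (intro conjI ballI)
  fix e assume e: "e \<in> edges G"
  have "{t \<in> {0..len G e}. eparam G e t \<in> {p \<in> gcarrier G. \<phi> p \<in> U}}
      = {0..len G e} \<inter> (\<lambda>t. \<phi> (eparam G e t)) -` U"
    using eparam_in_gcarrier[OF G e] by auto
  then show "openin (top_of_set {0..len G e}) {t \<in> {0..len G e}. eparam G e t \<in> {p \<in> gcarrier G. \<phi> p \<in> U}}"
    using continuous_openin_preimage_gen assms e by metis
qed auto

lemma continuous_map_eparam:
  assumes G: "closed_graph G" and e: "e \<in> edges G"
  shows "continuous_map (top_of_set {0..len G e}) (gtop G) (eparam G e)"
  unfolding continuous_map_def
  using eparam_in_gcarrier[OF G e] topspace_gtop[OF G] e by (auto simp: openin_gtop gopen_def)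

section \<open>Reduction to vertex values\<close>

lemma sq_increment_le_integral_sq:
  fixes F g :: "real \<Rightarrow> real"
  assumes l: "0 < l" and F: "continuous_on {0..l} F" and g: "continuous_on {0..l} g"
    and deriv: "\<And>t. t \<in> {0<..<l} \<Longrightarrow> (F has_vector_derivative g t) (at t)"
  shows "(F l - F 0)\<^sup>2 / l \<le> integral {0..l} (\<lambda>t. (g t)\<^sup>2)"
proof -
  define D where "D = F l - F 0"
  define I where "I = integral {0..l} (\<lambda>t. (g t)\<^sup>2)"
  have "(g has_integral D) {0..l}"
    unfolding D_def using fundamental_theorem_of_calculus_interior[of 0 l F g] l F deriv by auto
  moreover have "((\<lambda>t. (g t)\<^sup>2) has_integral I) {0..l}"
    unfolding I_def using g by (intro integrable_integral integrable_continuous_real continuous_intros)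
  ultimately have "((\<lambda>t. (g t)\<^sup>2 - (2 * (D / l)) * g t + (D / l)\<^sup>2)
      has_integral (I - (2 * (D / l)) * D + (D / l)\<^sup>2 * l)) {0..l}"
    using has_integral_const_real[of "(D / l)\<^sup>2" 0 l] l
    by (intro has_integral_add has_integral_diff has_integral_mult_right) (auto simp: mult.commute)
  moreover have "0 \<le> (g t)\<^sup>2 - (2 * (D / l)) * g t + (D / l)\<^sup>2" for t
    using zero_le_power2[of "g t - D / l"] by (simp add: power2_diff algebra_simps)
  ultimately have "0 \<le> I - (2 * (D / l)) * D + (D / l)\<^sup>2 * l"
    by (rule has_integral_nonneg)
  also have "\<dots> = I - D\<^sup>2 / l"
    using l by (simp add: field_simps power2_eq_square)
  finally show ?thesis
    unfolding D_def I_def by simp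
qed

lemma edge_increment_sq_le_energy:
  assumes G: "closed_graph G" and e: "e \<in> edges G" and f: "C1_Dir G f"
  shows "(f (Vtx (tgt G e)) - f (Vtx (src G e)))\<^sup>2 / len G e
           \<le> integral {0<..<len G e} (\<lambda>t. (deriv (\<lambda>s. f (EPt e s)) t)\<^sup>2)"
proof -
  define l where "l = len G e"
  have l: "0 < l"
    using G e unfolding closed_graph_def l_def by auto
  obtain f' where f': "\<And>t. t \<in> {0<..<l} \<Longrightarrow> ((\<lambda>s. f (EPt e s)) has_real_derivative f' t) (at t)"
    and "uniformly_continuous_on {0<..<l} f'"
    using f e unfolding C1_Dir_def l_def by blast
  then obtain g where "uniformly_continuous_on (closure {0<..<l}) g"
    and g: "\<And>t. t \<in> {0<..<l} \<Longrightarrow> f' t = g t"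
    using uniformly_continuous_on_extension_on_closure by metis
  then have gc: "continuous_on {0..l} g"
    using l uniformly_continuous_imp_continuous by fastforce
  have "continuous_map (top_of_set {0..l}) euclideanreal (f \<circ> eparam G e)"
    using continuous_map_compose[OF continuous_map_eparam[OF G e]] f
    unfolding C1_Dir_def l_def by blast
  then have Fc: "continuous_on {0..l} (\<lambda>t. f (eparam G e t))"
    by (simp add: o_def)
  have Fd: "((\<lambda>t. f (eparam G e t)) has_vector_derivative g t) (at t)" if t: "t \<in> {0<..<l}" for t
  proof -
    have "((\<lambda>t. f (eparam G e t)) has_real_derivative f' t) (at t)"
      by (rule has_field_derivative_transform_within_open[OF f'[OF t], of "{0<..<l}"])
         (use t in \<open>auto simp: eparam_def l_def\<close>)
    then show ?thesis
      using g[OF t] by (simp add: has_real_derivative_iff_has_vector_derivative)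
  qed
  have "(f (eparam G e l) - f (eparam G e 0))\<^sup>2 / l \<le> integral {0..l} (\<lambda>t. (g t)\<^sup>2)"
    by (rule sq_increment_le_integral_sq[OF l Fc gc Fd])
  also have "\<dots> = integral {0<..<l} (\<lambda>t. (g t)\<^sup>2)"
    by (simp add: integral_open_interval_real)
  also have "\<dots> = integral {0<..<l} (\<lambda>t. (deriv (\<lambda>s. f (EPt e s)) t)\<^sup>2)"
    using DERIV_imp_deriv[OF f'] g by (intro integral_cong) auto
  finally show ?thesis
    using l by (simp add: eparam_def l_def)
qed

definition discrete_energy :: "('v, 'e) cgraph \<Rightarrow> ('v \<Rightarrow> real) \<Rightarrow> real" where
  "discrete_energy G x = (\<Sum>e\<in>edges G. ewt G e * ((x (tgt G e) - x (src G e))\<^sup>2 / len G e))"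

lemma discrete_energy_nonneg:
  assumes "closed_graph G"
  shows "0 \<le> discrete_energy G x"
  using assms unfolding discrete_energy_def closed_graph_def by (auto intro!: sum_nonneg)

lemma discrete_energy_le_grad_norm2:
  assumes G: "closed_graph G" and f: "C1_Dir G f"
  shows "sqrt (discrete_energy G (\<lambda>v. f (Vtx v))) \<le> grad_norm2 G f"
  unfolding grad_norm2_def discrete_energy_def
proof (intro real_sqrt_le_mono sum_mono mult_left_mono)
  fix e assume e: "e \<in> edges G"
  show "(f (Vtx (tgt G e)) - f (Vtx (src G e)))\<^sup>2 / len G e
      \<le> integral {0<..<len G e} (\<lambda>t. (deriv (\<lambda>s. f (EPt e s)) t)\<^sup>2)"
    by (rule edge_increment_sq_le_energy[OF G e f])
  show "0 \<le> ewt G e"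
    using G e by (auto simp: closed_graph_def less_imp_le)
qed

section \<open>Isoperimetric bound for vertex cuts\<close>

definition pl_extension :: "('v, 'e) cgraph \<Rightarrow> ('v \<Rightarrow> real) \<Rightarrow> ('v, 'e) gpoint \<Rightarrow> real" where
  "pl_extension G x p = (case p of Vtx v \<Rightarrow> x v
     | EPt e t \<Rightarrow> x (src G e) + (x (tgt G e) - x (src G e)) * t / len G e)"

lemma pl_extension_eparam:
  assumes "closed_graph G" "e \<in> edges G"
  shows "pl_extension G x (eparam G e t) = x (src G e) + (x (tgt G e) - x (src G e)) * t / len G e"
  using assms unfolding closed_graph_def eparam_def pl_extension_def by auto

lemma openin_gtop_pl_extension_preimage:
  assumes G: "closed_graph G" and "open U"
  shows "openin (gtop G) {p \<in> gcarrier G. pl_extension G x p \<in> U}"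
proof (rule openin_gtop_preimage[OF G \<open>open U\<close>])
  fix e assume e: "e \<in> edges G"
  then have eq: "(\<lambda>t. pl_extension G x (eparam G e t))
      = (\<lambda>t. x (src G e) + (x (tgt G e) - x (src G e)) * t / len G e)"
    using pl_extension_eparam[OF G] by blast
  show "continuous_on {0..len G e} (\<lambda>t. pl_extension G x (eparam G e t))"
    unfolding eq using G e by (intro continuous_intros) (auto simp: closed_graph_def)
qed

definition cut_edges :: "('v, 'e) cgraph \<Rightarrow> 'v set \<Rightarrow> 'e set" where
  "cut_edges G S = {e \<in> edges G. (src G e \<in> S) \<noteq> (tgt G e \<in> S)}"

definition cut_weight :: "('v, 'e) cgraph \<Rightarrow> 'v set \<Rightarrow> real" where
  "cut_weight G S = (\<Sum>e\<in>cut_edges G S. ewt G e)"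

lemma bdry_weight_nonneg:
  assumes G: "closed_graph G"
  shows "0 \<le> bdry_weight G \<Omega>"
proof -
  have "0 \<le> ewt G e" if "EPt e t \<in> gtop G frontier_of \<Omega>" for e t
    using that frontier_of_subset_topspace[of "gtop G" \<Omega>] topspace_gtop[OF G] G
    by (force simp: gcarrier_def closed_graph_def)
  then show ?thesis
    using G unfolding bdry_weight_def closed_graph_def
    by (intro add_nonneg_nonneg sum_nonneg) (auto intro: less_imp_le)
qed

lemma iso_const_le:
  assumes G: "closed_graph G" and "openin (gtop G) \<Omega>" and "finite (gtop G frontier_of \<Omega>)"
    and "0 < min (vol G \<Omega>) (vol G (gcarrier G - \<Omega>))"
  shows "iso_const G \<nu> \<le> bdry_weight G \<Omega> * min (vol G \<Omega>) (vol G (gcarrier G - \<Omega>)) powr (1 / \<nu> - 1)"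
  unfolding iso_const_def
proof (rule cInf_lower)
  show "bdd_below {bdry_weight G \<Omega> * min (vol G \<Omega>) (vol G (gcarrier G - \<Omega>)) powr (1 / \<nu> - 1) | \<Omega>.
      openin (gtop G) \<Omega> \<and> finite (gtop G frontier_of \<Omega>) \<and> 0 < min (vol G \<Omega>) (vol G (gcarrier G - \<Omega>))}"
    by (rule bdd_belowI[of _ 0]) (auto intro!: mult_nonneg_nonneg bdry_weight_nonneg[OF G])
qed (use assms in blast)

lemma frontier_of_pl_indicator_superlevel:
  fixes S :: "'v set" and G :: "('v, 'e) cgraph"
  assumes G: "closed_graph G"
  defines "\<Omega> \<equiv> {p \<in> gcarrier G. pl_extension G (indicator S) p > 1/2}"
  shows "gtop G frontier_of \<Omega> \<subseteq> (\<lambda>e. EPt e (len G e / 2)) ` cut_edges G S"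
proof -
  \<comment> \<open>\<Omega> is open and its closure avoids the open set C where the extension is below 1/2, so the
    frontier lies in the level set {1/2}, which consists of the midpoints of the cut edges\<close>
  define C where "C = {p \<in> gcarrier G. pl_extension G (indicator S) p < 1/2}"
  have "openin (gtop G) \<Omega>" "openin (gtop G) C"
    unfolding \<Omega>_def C_def
    using openin_gtop_pl_extension_preimage[OF G, of "{1/2<..}"]
      openin_gtop_pl_extension_preimage[OF G, of "{..<1/2}"] by simp_all
  then have "gtop G interior_of \<Omega> = \<Omega>" and "closedin (gtop G) (gcarrier G - C)"
    using topspace_gtop[OF G] by (simp add: interior_of_openin, metis closedin_diff closedin_topspace)
  moreover have "gtop G closure_of \<Omega> \<subseteq> gcarrier G - C"
    by (rule closure_of_minimal[OF _ \<open>closedin (gtop G) (gcarrier G - C)\<close>]) (auto simp: \<Omega>_def C_def)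
  ultimately have "gtop G frontier_of \<Omega> \<subseteq> gcarrier G - C - \<Omega>"
    by (auto simp: frontier_of_def)
  also have "\<dots> \<subseteq> (\<lambda>e. EPt e (len G e / 2)) ` cut_edges G S"
  proof
    fix p assume p: "p \<in> gcarrier G - C - \<Omega>"
    then have half: "pl_extension G (indicator S) p = 1/2"
      by (auto simp: C_def \<Omega>_def)
    from p consider v where "p = Vtx v"
      | e t where "p = EPt e t" "e \<in> edges G" "0 < t" "t < len G e"
      unfolding gcarrier_def by blast
    then show "p \<in> (\<lambda>e. EPt e (len G e / 2)) ` cut_edges G S"
    proof cases
      case 1
      then show ?thesis
        using half by (simp add: pl_extension_def indicator_def of_bool_def split: if_splits)
    next
      case 2
      then have "(src G e \<in> S) \<noteq> (tgt G e \<in> S) \<and> t = len G e / 2"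
        using half by (auto simp: pl_extension_def indicator_def of_bool_def field_simps split: if_splits)
      then show ?thesis
        using 2 by (auto simp: cut_edges_def)
    qed
  qed
  finally show ?thesis .
qed

lemma bdry_weight_pl_indicator_superlevel:
  assumes G: "closed_graph G"
  shows "bdry_weight G {p \<in> gcarrier G. pl_extension G (indicator S) p > 1/2} \<le> cut_weight G S"
proof -
  let ?\<Omega> = "{p \<in> gcarrier G. pl_extension G (indicator S) p > 1/2}"
  have fr: "gtop G frontier_of ?\<Omega> \<subseteq> (\<lambda>e. EPt e (len G e / 2)) ` cut_edges G S"
    by (rule frontier_of_pl_indicator_superlevel[OF G])
  have fin: "finite (cut_edges G S)"
    using G by (simp add: cut_edges_def closed_graph_def)
  have "(\<Sum>(e, t)\<in>{(e, t). EPt e t \<in> gtop G frontier_of ?\<Omega>}. ewt G e)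
      \<le> (\<Sum>(e, t)\<in>(\<lambda>e. (e, len G e / 2)) ` cut_edges G S. ewt G e)"
    using fr fin G by (intro sum_mono2) (auto simp: cut_edges_def closed_graph_def less_imp_le)
  also have "\<dots> = cut_weight G S"
    unfolding cut_weight_def by (subst sum.reindex) (auto simp: inj_on_def)
  moreover have no_vertex: "{v \<in> verts G. Vtx v \<in> gtop G frontier_of ?\<Omega>} = {}"
    using fr by auto
  ultimately show ?thesis
    unfolding bdry_weight_def no_vertex by simp
qed

lemma iso_const_cut_weight:
  assumes G: "closed_graph G" and S: "S \<subseteq> verts G" and pos: "0 < (\<Sum>v\<in>S. vmeas G v)"
    and half: "2 * (\<Sum>v\<in>S. vmeas G v) \<le> (\<Sum>v\<in>verts G. vmeas G v)"
  shows "iso_const G \<nu> * (\<Sum>v\<in>S. vmeas G v) powr (1 - 1/\<nu>) \<le> cut_weight G S"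
proof -
  define \<Omega> where "\<Omega> = {p \<in> gcarrier G. pl_extension G (indicator S) p > 1/2}"
  define VS where "VS = (\<Sum>v\<in>S. vmeas G v)"
  have fin: "finite (verts G)" "finite (edges G)"
    using G by (auto simp: closed_graph_def)
  have "{v \<in> verts G. Vtx v \<in> \<Omega>} = S" "{v \<in> verts G. Vtx v \<in> gcarrier G - \<Omega>} = verts G - S"
    using S by (auto simp: \<Omega>_def gcarrier_def pl_extension_def indicator_def)
  then have "vol G \<Omega> = VS" "vol G (gcarrier G - \<Omega>) = (\<Sum>v\<in>verts G. vmeas G v) - VS"
    using S fin by (simp_all add: vol_def VS_def sum_diff)
  then have min_vol: "min (vol G \<Omega>) (vol G (gcarrier G - \<Omega>)) = VS"
    using half by (simp add: VS_def)
  have "gtop G frontier_of \<Omega> \<subseteq> (\<lambda>e. EPt e (len G e / 2)) ` cut_edges G S"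
    unfolding \<Omega>_def by (rule frontier_of_pl_indicator_superlevel[OF G])
  then have "finite (gtop G frontier_of \<Omega>)"
    using fin by (auto simp: cut_edges_def intro: finite_subset)
  moreover have "openin (gtop G) \<Omega>"
    unfolding \<Omega>_def using openin_gtop_pl_extension_preimage[OF G, of "{1/2<..}"] by simp
  ultimately have "iso_const G \<nu> \<le> bdry_weight G \<Omega> * VS powr (1 / \<nu> - 1)"
    using iso_const_le[OF G] min_vol pos VS_def by metis
  also have "\<dots> \<le> cut_weight G S * VS powr (1 / \<nu> - 1)"
    unfolding \<Omega>_def by (intro mult_right_mono bdry_weight_pl_indicator_superlevel[OF G]) simp
  finally have "iso_const G \<nu> * VS powr (1 - 1/\<nu>) \<le> cut_weight G S * VS powr (1 / \<nu> - 1) * VS powr (1 - 1/\<nu>)"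
    by (rule mult_right_mono) simp
  also have "\<dots> = cut_weight G S"
    using pos by (simp add: VS_def mult.assoc flip: powr_add)
  finally show ?thesis
    unfolding VS_def .
qed

section \<open>A discrete co-area inequality\<close>

definition edge_variation :: "('v, 'e) cgraph \<Rightarrow> ('v \<Rightarrow> real) \<Rightarrow> real" where
  "edge_variation G H = (\<Sum>e\<in>edges G. ewt G e * \<bar>H (src G e) - H (tgt G e)\<bar>)"

lemma edge_variation_nonneg:
  assumes "closed_graph G"
  shows "0 \<le> edge_variation G H"
  using assms unfolding edge_variation_def closed_graph_def by (auto intro!: sum_nonneg)

lemma edge_variation_lower_on_support:
  assumes G: "closed_graph G" and H: "\<forall>v\<in>verts G. 0 \<le> H v"
    and S: "S = {v \<in> verts G. H v > 0}" and x: "0 \<le> x" "\<And>v. v \<in> S \<Longrightarrow> x \<le> H v"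
  shows "edge_variation G H = edge_variation G (\<lambda>v. if v \<in> S then H v - x else H v) + x * cut_weight G S"
proof -
  let ?H' = "\<lambda>v. if v \<in> S then H v - x else H v"
  have "ewt G e * \<bar>H (src G e) - H (tgt G e)\<bar>
      = ewt G e * \<bar>?H' (src G e) - ?H' (tgt G e)\<bar> + (if e \<in> cut_edges G S then x * ewt G e else 0)"
    if e: "e \<in> edges G" for e
  proof -
    have "src G e \<in> verts G" "tgt G e \<in> verts G"
      using G e by (auto simp: closed_graph_def)
    then have "src G e \<notin> S \<Longrightarrow> H (src G e) = 0" "tgt G e \<notin> S \<Longrightarrow> H (tgt G e) = 0"
      using H S by force+
    moreover have "v \<in> S \<Longrightarrow> \<bar>H v\<bar> = H v \<and> x \<le> H v" for v
      using x by force
    ultimately show ?thesis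
      using e x by (auto simp: cut_edges_def algebra_simps)
  qed
  then have "edge_variation G H
      = edge_variation G ?H' + (\<Sum>e\<in>edges G. if e \<in> cut_edges G S then x * ewt G e else 0)"
    unfolding edge_variation_def by (simp add: sum.distrib)
  also have "(\<Sum>e\<in>edges G. if e \<in> cut_edges G S then x * ewt G e else 0) = x * cut_weight G S"
    unfolding cut_weight_def cut_edges_def sum_distrib_left using G
    by (simp add: sum.inter_filter closed_graph_def)
  finally show ?thesis .
qed

lemma iso_const_mult_sum_le_cut_weight:
  assumes G: "closed_graph G" and \<nu>: "\<nu> > 1" and K: "0 \<le> iso_const G \<nu>"
    and \<psi>: "\<And>v. v \<in> verts G \<Longrightarrow> 0 \<le> \<psi> v"
    and S: "S \<subseteq> verts G" "S \<noteq> {}" and half: "2 * (\<Sum>v\<in>S. vmeas G v) \<le> (\<Sum>v\<in>verts G. vmeas G v)"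
  shows "iso_const G \<nu> * (\<Sum>v\<in>S. vmeas G v * \<psi> v)
    \<le> cut_weight G S * (\<Sum>v\<in>verts G. vmeas G v * \<psi> v powr \<nu>) powr (1/\<nu>)"
proof -
  define N where "N = (\<Sum>v\<in>verts G. vmeas G v * \<psi> v powr \<nu>) powr (1/\<nu>)"
  have fin: "finite (verts G)" and V: "\<And>v. v \<in> verts G \<Longrightarrow> 0 < vmeas G v"
    using G by (auto simp: closed_graph_def)
  have "0 < (\<Sum>v\<in>S. vmeas G v)"
    using S fin V by (intro sum_pos) (auto intro: finite_subset)
  then have iso: "iso_const G \<nu> * (\<Sum>v\<in>S. vmeas G v) powr (1 - 1/\<nu>) \<le> cut_weight G S"
    using iso_const_cut_weight[OF G S(1) _ half] by simp
  have "(\<Sum>v\<in>S. vmeas G v * \<psi> v) \<le> (\<Sum>v\<in>S. vmeas G v) powr (1 - 1/\<nu>) * N"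
    unfolding N_def using fin S(1) _ \<psi> \<nu> by (rule sum_le_measure_powr_norm) (use V in \<open>simp add: less_imp_le\<close>)
  then have "iso_const G \<nu> * (\<Sum>v\<in>S. vmeas G v * \<psi> v) \<le> (iso_const G \<nu> * (\<Sum>v\<in>S. vmeas G v) powr (1 - 1/\<nu>)) * N"
    using K by (simp add: mult_left_mono mult.assoc)
  also have "\<dots> \<le> cut_weight G S * N"
    using iso by (simp add: N_def mult_right_mono)
  finally show ?thesis
    unfolding N_def .
qed

lemma lower_by_min_on_support:
  fixes H :: "'a \<Rightarrow> real"
  assumes fin: "finite A" and H: "\<forall>v\<in>A. 0 \<le> H v"
    and S: "S = {v\<in>A. H v > 0}" "S \<noteq> {}" and x: "x = Min (H ` S)"
  shows "0 < x" and "\<forall>v\<in>S. x \<le> H v" and "\<forall>v\<in>A. 0 \<le> (if v \<in> S then H v - x else H v)"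
    and "{v\<in>A. (if v \<in> S then H v - x else H v) > 0} \<subset> S"
proof -
  have "finite S"
    using fin S(1) by simp
  then have "x \<in> H ` S" and x_le: "\<forall>v\<in>S. x \<le> H v"
    using S(2) unfolding x by auto
  then obtain v0 where "v0 \<in> S" "H v0 = x"
    by blast
  then show "0 < x" and "\<forall>v\<in>S. x \<le> H v" and "\<forall>v\<in>A. 0 \<le> (if v \<in> S then H v - x else H v)"
    and "{v\<in>A. (if v \<in> S then H v - x else H v) > 0} \<subset> S"
    using H x_le S(1) by auto
qed

lemma sum_lower_on_subset:
  fixes w H \<psi> :: "'a \<Rightarrow> real"
  assumes "finite A" and "S \<subseteq> A"
  shows "(\<Sum>v\<in>A. w v * H v * \<psi> v)
    = (\<Sum>v\<in>A. w v * (if v \<in> S then H v - x else H v) * \<psi> v) + x * (\<Sum>v\<in>S. w v * \<psi> v)"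
proof -
  have "(\<Sum>v\<in>A. w v * H v * \<psi> v)
      = (\<Sum>v\<in>A. w v * (if v \<in> S then H v - x else H v) * \<psi> v) + (\<Sum>v\<in>A. if v \<in> S then x * (w v * \<psi> v) else 0)"
    unfolding sum.distrib[symmetric] by (intro sum.cong) (auto simp: algebra_simps)
  also have "(\<Sum>v\<in>A. if v \<in> S then x * (w v * \<psi> v) else 0) = x * (\<Sum>v\<in>S. w v * \<psi> v)"
    using assms by (simp add: sum.inter_restrict[symmetric] Int_absorb1 sum_distrib_left)
  finally show ?thesis .
qed

lemma iso_const_mult_le_edge_variation:
  assumes G: "closed_graph G" and \<nu>: "\<nu> > 1" and K: "0 \<le> iso_const G \<nu>"
    and \<psi>: "\<And>v. v \<in> verts G \<Longrightarrow> 0 \<le> \<psi> v"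
    and H: "\<forall>v\<in>verts G. 0 \<le> H v"
    and half: "2 * (\<Sum>v\<in>{v\<in>verts G. H v > 0}. vmeas G v) \<le> (\<Sum>v\<in>verts G. vmeas G v)"
  shows "iso_const G \<nu> * (\<Sum>v\<in>verts G. vmeas G v * H v * \<psi> v)
    \<le> (\<Sum>v\<in>verts G. vmeas G v * \<psi> v powr \<nu>) powr (1/\<nu>) * edge_variation G H"
  using H half
proof (induction "card {v\<in>verts G. H v > 0}" arbitrary: H rule: less_induct)
  case less
  define K where "K = iso_const G \<nu>"
  define N where "N = (\<Sum>v\<in>verts G. vmeas G v * \<psi> v powr \<nu>) powr (1/\<nu>)"
  define S where "S = {v\<in>verts G. H v > 0}"
  have fin: "finite (verts G)" and finS: "finite S" and SV: "S \<subseteq> verts G"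
    and V: "\<And>v. v \<in> verts G \<Longrightarrow> 0 \<le> vmeas G v"
    using G by (auto simp: closed_graph_def S_def less_imp_le)
  show ?case
  proof (cases "S = {}")
    case True
    then have "\<forall>v\<in>verts G. H v = 0"
      using less.prems(1) by (force simp: S_def)
    then show ?thesis
      using edge_variation_nonneg[OF G] by simp
  next
    case False
    \<comment> \<open>one layer of the layer-cake decomposition: lowering H by its least positive value x
      removes at least one vertex from the support\<close>
    define x where "x = Min (H ` S)"
    define H' where "H' v = (if v \<in> S then H v - x else H v)" for v
    have "0 < x" and x_le: "\<forall>v\<in>S. x \<le> H v" and H': "\<forall>v\<in>verts G. 0 \<le> H' v"
      and supp': "{v\<in>verts G. H' v > 0} \<subset> S"
      using lower_by_min_on_support[OF fin less.prems(1) S_def False x_def] unfolding H'_def by auto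
    have "card {v\<in>verts G. H' v > 0} < card S"
      using finS supp' by (rule psubset_card_mono)
    moreover have "(\<Sum>v\<in>{v\<in>verts G. H' v > 0}. vmeas G v) \<le> (\<Sum>v\<in>S. vmeas G v)"
      using supp' SV V by (intro sum_mono2[OF finS]) auto
    then have "2 * (\<Sum>v\<in>{v\<in>verts G. H' v > 0}. vmeas G v) \<le> (\<Sum>v\<in>verts G. vmeas G v)"
      using less.prems(2) by (simp add: S_def)
    ultimately have IH: "K * (\<Sum>v\<in>verts G. vmeas G v * H' v * \<psi> v) \<le> N * edge_variation G H'"
      using less.hyps H' unfolding K_def N_def S_def by blast
    have layer: "K * (\<Sum>v\<in>S. vmeas G v * \<psi> v) \<le> cut_weight G S * N"
      unfolding K_def N_def using G \<nu> K \<psi> SV False less.prems(2)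
      by (intro iso_const_mult_sum_le_cut_weight) (auto simp: S_def)
    have "K * (\<Sum>v\<in>verts G. vmeas G v * H v * \<psi> v)
        = K * (\<Sum>v\<in>verts G. vmeas G v * H' v * \<psi> v) + x * (K * (\<Sum>v\<in>S. vmeas G v * \<psi> v))"
      unfolding H'_def sum_lower_on_subset[OF fin SV, of "vmeas G" H \<psi> x] by (simp add: algebra_simps)
    also have "\<dots> \<le> N * edge_variation G H' + x * (cut_weight G S * N)"
      using IH layer \<open>0 < x\<close> by (intro add_mono mult_left_mono) auto
    also have "\<dots> = N * edge_variation G H"
    proof -
      have "edge_variation G H = edge_variation G H' + x * cut_weight G S"
        unfolding H'_def using \<open>0 < x\<close> x_le
        by (intro edge_variation_lower_on_support[OF G less.prems(1) S_def]) auto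
      then show ?thesis
        by (simp add: algebra_simps)
    qed
    finally show ?thesis
      unfolding K_def N_def .
  qed
qed

section \<open>Cauchy-Schwarz over the edges\<close>

lemma sum_edges_endpoints_eq_sum_vertices:
  fixes c :: "'e \<Rightarrow> real" and F :: "'v \<Rightarrow> real"
  assumes finV: "finite V" and finE: "finite E"
    and ends: "\<And>e. e \<in> E \<Longrightarrow> s e \<in> V \<and> t e \<in> V \<and> s e \<noteq> t e"
  shows "(\<Sum>e\<in>E. c e * (F (s e) + F (t e))) = (\<Sum>v\<in>V. F v * (\<Sum>e\<in>{e\<in>E. s e = v \<or> t e = v}. c e))"
proof -
  have "(\<Sum>v\<in>V. F v * (\<Sum>e\<in>{e\<in>E. s e = v \<or> t e = v}. c e))
      = (\<Sum>e\<in>E. \<Sum>v\<in>V. if s e = v \<or> t e = v then F v * c e else 0)"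
    by (subst sum.swap) (auto simp: sum_distrib_left sum.inter_filter[OF finE] intro!: sum.cong)
  also have "\<dots> = (\<Sum>e\<in>E. c e * (F (s e) + F (t e)))"
  proof (rule sum.cong[OF refl])
    fix e assume e: "e \<in> E"
    have "(\<Sum>v\<in>V. if s e = v \<or> t e = v then F v * c e else 0) = (\<Sum>v\<in>V \<inter> {s e, t e}. F v * c e)"
      by (subst sum.inter_restrict[OF finV]) (auto intro!: sum.cong)
    also have "V \<inter> {s e, t e} = {s e, t e}"
      using ends[OF e] by auto
    finally have "(\<Sum>v\<in>V. if s e = v \<or> t e = v then F v * c e else 0) = (\<Sum>v\<in>{s e, t e}. F v * c e)" .
    then show "(\<Sum>v\<in>V. if s e = v \<or> t e = v then F v * c e else 0) = c e * (F (s e) + F (t e))"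
      using ends[OF e] by (simp add: algebra_simps)
  qed
  finally show ?thesis
    by simp
qed

lemma incident_weight_le_rho_sup:
  assumes G: "closed_graph G" and v: "v \<in> verts G"
  shows "(\<Sum>e\<in>{e \<in> edges G. src G e = v \<or> tgt G e = v}. ewt G e * len G e / 2) \<le> rho_sup G * vmeas G v"
proof -
  have "(\<Sum>e\<in>{e \<in> edges G. src G e = v \<or> tgt G e = v}. ewt G e * len G e / 2) / vmeas G v \<le> rho_sup G"
    unfolding rho_sup_def using G v by (intro Max_ge) (auto simp: closed_graph_def)
  then show ?thesis
    using G v by (simp add: closed_graph_def divide_le_eq)
qed

lemma rho_sup_nonneg:
  assumes G: "closed_graph G" and "verts G \<noteq> {}"
  shows "0 \<le> rho_sup G"
proof -
  obtain v where v: "v \<in> verts G"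
    using assms by blast
  have "0 \<le> (\<Sum>e\<in>{e \<in> edges G. src G e = v \<or> tgt G e = v}. ewt G e * len G e / 2)"
    using G by (intro sum_nonneg) (auto simp: closed_graph_def less_imp_le)
  also have "\<dots> \<le> rho_sup G * vmeas G v"
    by (rule incident_weight_le_rho_sup[OF G v])
  finally have "0 \<le> rho_sup G * vmeas G v" .
  moreover have "0 < vmeas G v"
    using G v by (simp add: closed_graph_def)
  ultimately show ?thesis
    by (auto simp: zero_le_mult_iff)
qed

lemma endpoint_sq_sum_le_rho_sup:
  assumes G: "closed_graph G" and E: "E \<subseteq> {e \<in> edges G. src G e \<noteq> tgt G e}"
  shows "(\<Sum>e\<in>E. ewt G e * len G e * (\<bar>h (src G e)\<bar> + \<bar>h (tgt G e)\<bar>)\<^sup>2)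
    \<le> 4 * rho_sup G * (\<Sum>v\<in>verts G. vmeas G v * (h v)\<^sup>2)"
proof -
  have finV: "finite (verts G)" and finE: "finite E"
    using G E by (auto simp: closed_graph_def intro: finite_subset)
  have "(\<bar>a\<bar> + \<bar>b\<bar>)\<^sup>2 \<le> 2 * (a\<^sup>2 + b\<^sup>2)" for a b :: real
    using zero_le_power2[of "\<bar>a\<bar> - \<bar>b\<bar>"] by (simp add: power2_eq_square algebra_simps)
  then have "(\<Sum>e\<in>E. ewt G e * len G e * (\<bar>h (src G e)\<bar> + \<bar>h (tgt G e)\<bar>)\<^sup>2)
      \<le> (\<Sum>e\<in>E. (2 * ewt G e * len G e) * ((h (src G e))\<^sup>2 + (h (tgt G e))\<^sup>2))"
    using G E by (intro sum_mono) (auto simp: closed_graph_def mult.assoc intro!: mult_left_mono)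
  also have "\<dots> = (\<Sum>v\<in>verts G. (h v)\<^sup>2 * (\<Sum>e\<in>{e\<in>E. src G e = v \<or> tgt G e = v}. 2 * ewt G e * len G e))"
    using G E by (intro sum_edges_endpoints_eq_sum_vertices[OF finV finE]) (auto simp: closed_graph_def)
  also have "\<dots> \<le> (\<Sum>v\<in>verts G. (h v)\<^sup>2 * (4 * rho_sup G * vmeas G v))"
  proof (intro sum_mono mult_left_mono)
    fix v assume v: "v \<in> verts G"
    have "(\<Sum>e\<in>{e\<in>E. src G e = v \<or> tgt G e = v}. 2 * ewt G e * len G e)
        \<le> (\<Sum>e\<in>{e\<in>edges G. src G e = v \<or> tgt G e = v}. 2 * ewt G e * len G e)"
      using G E by (intro sum_mono2) (auto simp: closed_graph_def less_imp_le)
    also have "\<dots> = 4 * (\<Sum>e\<in>{e \<in> edges G. src G e = v \<or> tgt G e = v}. ewt G e * len G e / 2)"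
      by (simp add: sum_distrib_left mult.assoc)
    also have "\<dots> \<le> 4 * rho_sup G * vmeas G v"
      using incident_weight_le_rho_sup[OF G v] by simp
    finally show "(\<Sum>e\<in>{e\<in>E. src G e = v \<or> tgt G e = v}. 2 * ewt G e * len G e) \<le> 4 * rho_sup G * vmeas G v" .
  qed simp
  also have "\<dots> = 4 * rho_sup G * (\<Sum>v\<in>verts G. vmeas G v * (h v)\<^sup>2)"
    by (simp add: sum_distrib_left algebra_simps)
  finally show ?thesis .
qed

lemma weighted_edge_product_le:
  assumes G: "closed_graph G"
  shows "(\<Sum>e\<in>edges G. ewt G e * \<bar>h (src G e) - h (tgt G e)\<bar> * (\<bar>h (src G e)\<bar> + \<bar>h (tgt G e)\<bar>))
    \<le> 2 * sqrt (rho_sup G) * sqrt (discrete_energy G h) * sqrt (\<Sum>v\<in>verts G. vmeas G v * (h v)\<^sup>2)"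
proof -
  define E where "E = {e \<in> edges G. src G e \<noteq> tgt G e}"
  define A where "A e = sqrt (ewt G e / len G e) * \<bar>h (tgt G e) - h (src G e)\<bar>" for e
  define B where "B e = sqrt (ewt G e * len G e) * (\<bar>h (src G e)\<bar> + \<bar>h (tgt G e)\<bar>)" for e
  define N2 where "N2 = (\<Sum>v\<in>verts G. vmeas G v * (h v)\<^sup>2)"
  have finE: "finite (edges G)"
    using G by (simp add: closed_graph_def)
  have pos: "0 < len G e" "0 < ewt G e" if "e \<in> E" for e
    using G that by (auto simp: closed_graph_def E_def)
  have "(\<Sum>e\<in>edges G. ewt G e * \<bar>h (src G e) - h (tgt G e)\<bar> * (\<bar>h (src G e)\<bar> + \<bar>h (tgt G e)\<bar>))
      = (\<Sum>e\<in>E. A e * B e)"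
  proof (rule sum.mono_neutral_cong_right[OF finE])
    fix e assume "e \<in> E"
    then have "sqrt (ewt G e / len G e) * sqrt (ewt G e * len G e) = ewt G e"
      using pos[of e] by (simp add: real_sqrt_mult[symmetric] power2_eq_square[symmetric])
    moreover have "A e * B e = (sqrt (ewt G e / len G e) * sqrt (ewt G e * len G e))
        * (\<bar>h (tgt G e) - h (src G e)\<bar> * (\<bar>h (src G e)\<bar> + \<bar>h (tgt G e)\<bar>))"
      unfolding A_def B_def by (simp only: mult_ac)
    ultimately show "ewt G e * \<bar>h (src G e) - h (tgt G e)\<bar> * (\<bar>h (src G e)\<bar> + \<bar>h (tgt G e)\<bar>) = A e * B e"
      by (simp add: abs_minus_commute mult.assoc)
  qed (auto simp: E_def)
  also have "\<dots> \<le> sqrt ((\<Sum>e\<in>E. (A e)\<^sup>2) * (\<Sum>e\<in>E. (B e)\<^sup>2))"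
    by (rule real_le_rsqrt[OF Cauchy_Schwarz_ineq_sum])
  also have "\<dots> \<le> sqrt (discrete_energy G h * (4 * rho_sup G * N2))"
  proof (intro real_sqrt_le_mono mult_mono)
    have "(A e)\<^sup>2 = ewt G e * ((h (tgt G e) - h (src G e))\<^sup>2 / len G e)" if "e \<in> E" for e
      using pos[OF that] by (simp add: A_def power_mult_distrib)
    then have "(\<Sum>e\<in>E. (A e)\<^sup>2) = (\<Sum>e\<in>E. ewt G e * ((h (tgt G e) - h (src G e))\<^sup>2 / len G e))"
      by simp
    also have "\<dots> \<le> discrete_energy G h"
      unfolding discrete_energy_def using G
      by (intro sum_mono2[OF finE]) (auto simp: E_def closed_graph_def)
    finally show "(\<Sum>e\<in>E. (A e)\<^sup>2) \<le> discrete_energy G h" .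
    have "(B e)\<^sup>2 = ewt G e * len G e * (\<bar>h (src G e)\<bar> + \<bar>h (tgt G e)\<bar>)\<^sup>2" if "e \<in> E" for e
      using pos[OF that] by (simp add: B_def power_mult_distrib)
    then have "(\<Sum>e\<in>E. (B e)\<^sup>2) = (\<Sum>e\<in>E. ewt G e * len G e * (\<bar>h (src G e)\<bar> + \<bar>h (tgt G e)\<bar>)\<^sup>2)"
      by simp
    also have "\<dots> \<le> 4 * rho_sup G * N2"
      unfolding N2_def by (rule endpoint_sq_sum_le_rho_sup[OF G]) (simp add: E_def)
    finally show "(\<Sum>e\<in>E. (B e)\<^sup>2) \<le> 4 * rho_sup G * N2" .
  qed (auto intro: discrete_energy_nonneg[OF G] sum_nonneg)
  also have "\<dots> = 2 * sqrt (rho_sup G) * sqrt (discrete_energy G h) * sqrt N2"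
    by (simp add: real_sqrt_mult)
  finally show ?thesis
    unfolding N2_def .
qed

section \<open>The discrete Nash inequality\<close>

lemma moment_bound_of_median_zero:
  assumes G: "closed_graph G" and \<nu>: "\<nu> > 1" and K: "0 \<le> iso_const G \<nu>"
    and above: "2 * (\<Sum>v\<in>{v\<in>verts G. h v > 0}. vmeas G v) \<le> (\<Sum>v\<in>verts G. vmeas G v)"
    and below: "2 * (\<Sum>v\<in>{v\<in>verts G. h v < 0}. vmeas G v) \<le> (\<Sum>v\<in>verts G. vmeas G v)"
  shows "iso_const G \<nu> * (\<Sum>v\<in>verts G. vmeas G v * \<bar>h v\<bar> powr (2 + 1/\<nu>))
    \<le> (\<Sum>v\<in>verts G. vmeas G v * \<bar>h v\<bar>) powr (1/\<nu>)
      * (2 * sqrt (rho_sup G) * sqrt (discrete_energy G h) * sqrt (\<Sum>v\<in>verts G. vmeas G v * (h v)\<^sup>2))"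
proof -
  define K where "K = iso_const G \<nu>"
  define \<psi> where "\<psi> v = \<bar>h v\<bar> powr (1/\<nu>)" for v
  define hp where "hp v = (max (h v) 0)\<^sup>2" for v
  define hm where "hm v = (max (- h v) 0)\<^sup>2" for v
  have norm_\<psi>: "(\<Sum>v\<in>verts G. vmeas G v * \<psi> v powr \<nu>) powr (1/\<nu>) = (\<Sum>v\<in>verts G. vmeas G v * \<bar>h v\<bar>) powr (1/\<nu>)"
    using \<nu> by (simp add: \<psi>_def powr_powr)
  define N where "N = (\<Sum>v\<in>verts G. vmeas G v * \<bar>h v\<bar>) powr (1/\<nu>)"
  have "vmeas G v * hp v * \<psi> v + vmeas G v * hm v * \<psi> v = vmeas G v * \<bar>h v\<bar> powr (2 + 1/\<nu>)" for v
  proof -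
    have "vmeas G v * hp v * \<psi> v + vmeas G v * hm v * \<psi> v = vmeas G v * ((hp v + hm v) * \<psi> v)"
      by (simp add: algebra_simps)
    also have "(hp v + hm v) * \<psi> v = \<bar>h v\<bar> powr (2 + 1/\<nu>)"
      by (cases "h v = 0") (auto simp: hp_def hm_def \<psi>_def max_def powr_add)
    finally show ?thesis .
  qed
  then have "K * (\<Sum>v\<in>verts G. vmeas G v * \<bar>h v\<bar> powr (2 + 1/\<nu>))
      = K * (\<Sum>v\<in>verts G. vmeas G v * hp v * \<psi> v) + K * (\<Sum>v\<in>verts G. vmeas G v * hm v * \<psi> v)"
    by (simp flip: distrib_left sum.distrib)
  also have "\<dots> \<le> N * edge_variation G hp + N * edge_variation G hm"
  proof (intro add_mono)
    have \<psi>: "\<And>v. v \<in> verts G \<Longrightarrow> 0 \<le> \<psi> v" and "\<forall>v\<in>verts G. 0 \<le> hp v" "\<forall>v\<in>verts G. 0 \<le> hm v"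
      by (simp_all add: \<psi>_def hp_def hm_def)
    moreover have "{v\<in>verts G. hp v > 0} = {v\<in>verts G. h v > 0}" "{v\<in>verts G. hm v > 0} = {v\<in>verts G. h v < 0}"
      by (auto simp: hp_def hm_def max_def)
    ultimately show "K * (\<Sum>v\<in>verts G. vmeas G v * hp v * \<psi> v) \<le> N * edge_variation G hp"
      and "K * (\<Sum>v\<in>verts G. vmeas G v * hm v * \<psi> v) \<le> N * edge_variation G hm"
      using iso_const_mult_le_edge_variation[OF G \<nu> K \<psi>] above below
      unfolding K_def N_def norm_\<psi>[symmetric] by simp_all
  qed
  also have "\<dots> \<le> N * (\<Sum>e\<in>edges G. ewt G e * \<bar>h (src G e) - h (tgt G e)\<bar> * (\<bar>h (src G e)\<bar> + \<bar>h (tgt G e)\<bar>))"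
    unfolding distrib_left[symmetric] edge_variation_def sum.distrib[symmetric] hp_def hm_def
    using G pos_neg_part_sq_diff_le
    by (intro mult_left_mono sum_mono)
      (auto simp: N_def closed_graph_def mult.assoc simp flip: distrib_left intro!: mult_left_mono)
  also have "\<dots> \<le> N * (2 * sqrt (rho_sup G) * sqrt (discrete_energy G h) * sqrt (\<Sum>v\<in>verts G. vmeas G v * (h v)\<^sup>2))"
    using weighted_edge_product_le[OF G, of h] by (simp add: N_def mult_left_mono)
  finally show ?thesis
    unfolding K_def N_def .
qed

lemma discrete_nash_median_zero:
  assumes G: "closed_graph G" and \<nu>: "\<nu> > 1" and K: "0 \<le> iso_const G \<nu>"
    and above: "2 * (\<Sum>v\<in>{v\<in>verts G. h v > 0}. vmeas G v) \<le> (\<Sum>v\<in>verts G. vmeas G v)"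
    and below: "2 * (\<Sum>v\<in>{v\<in>verts G. h v < 0}. vmeas G v) \<le> (\<Sum>v\<in>verts G. vmeas G v)"
  shows "iso_const G \<nu> * (\<Sum>v\<in>verts G. vmeas G v * (h v)\<^sup>2) powr (1/2 + 1/\<nu>)
    \<le> 2 * sqrt (rho_sup G) * sqrt (discrete_energy G h) * (\<Sum>v\<in>verts G. vmeas G v * \<bar>h v\<bar>) powr (2/\<nu>)"
proof -
  define N1 where "N1 = (\<Sum>v\<in>verts G. vmeas G v * \<bar>h v\<bar>)"
  define N2 where "N2 = (\<Sum>v\<in>verts G. vmeas G v * (h v)\<^sup>2)"
  define T where "T = (\<Sum>v\<in>verts G. vmeas G v * \<bar>h v\<bar> powr (2 + 1/\<nu>))"
  define R where "R = 2 * sqrt (rho_sup G) * sqrt (discrete_energy G h)"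
  have finV: "finite (verts G)" and V: "\<And>v. v \<in> verts G \<Longrightarrow> 0 \<le> vmeas G v"
    using G by (auto simp: closed_graph_def less_imp_le)
  have "N2 \<ge> 0"
    unfolding N2_def using V by (simp add: sum_nonneg)
  have "iso_const G \<nu> * N2 powr ((\<nu> + 1) / \<nu>) \<le> iso_const G \<nu> * (T * N1 powr (1/\<nu>))"
    unfolding N2_def T_def N1_def
    using sum_sq_powr_le_interpolation[OF finV V, where h=h and \<nu>=\<nu>] \<nu> K by (intro mult_left_mono) auto
  also have "\<dots> = (iso_const G \<nu> * T) * N1 powr (1/\<nu>)"
    by simp
  also have "\<dots> \<le> (N1 powr (1/\<nu>) * (R * sqrt N2)) * N1 powr (1/\<nu>)"
    using moment_bound_of_median_zero[OF G \<nu> K above below]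
    unfolding T_def N1_def R_def N2_def by (intro mult_right_mono) (auto simp: mult.assoc)
  also have "\<dots> = (R * N1 powr (2/\<nu>)) * sqrt N2"
    by (simp add: algebra_simps flip: powr_add)
  finally have "iso_const G \<nu> * N2 powr ((\<nu> + 1) / \<nu>) \<le> (R * N1 powr (2/\<nu>)) * sqrt N2" .
  moreover have "(\<nu> + 1) / \<nu> = (1/2 + 1/\<nu>) + 1/2"
    using \<nu> by (simp add: field_simps)
  then have "N2 powr ((\<nu> + 1) / \<nu>) = N2 powr (1/2 + 1/\<nu>) * sqrt N2"
    using \<open>N2 \<ge> 0\<close> by (simp only: powr_add powr_half_sqrt)
  ultimately have "(iso_const G \<nu> * N2 powr (1/2 + 1/\<nu>)) * sqrt N2 \<le> (R * N1 powr (2/\<nu>)) * sqrt N2"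
    by (simp add: mult.assoc)
  moreover have "N1 = 0" if "N2 = 0"
  proof -
    have "\<forall>v\<in>verts G. vmeas G v * (h v)\<^sup>2 = 0"
      using that V sum_nonneg_eq_0_iff[OF finV, of "\<lambda>v. vmeas G v * (h v)\<^sup>2"] by (simp add: N2_def)
    then have "\<forall>v\<in>verts G. h v = 0"
      using G by (force simp: closed_graph_def)
    then show ?thesis
      by (simp add: N1_def)
  qed
  ultimately show ?thesis
    using \<open>N2 \<ge> 0\<close> unfolding N1_def[symmetric] N2_def[symmetric] R_def[symmetric]
    by (cases "N2 = 0") auto
qed

lemma weighted_abs_sum_pos:
  fixes w h :: "'a \<Rightarrow> real"
  assumes fin: "finite A" and w: "\<And>v. v \<in> A \<Longrightarrow> 0 < w v" and pos: "0 < (\<Sum>v\<in>A. w v * (h v)\<^sup>2)"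
  shows "0 < (\<Sum>v\<in>A. w v * \<bar>h v\<bar>)"
proof -
  obtain v where v: "v \<in> A" "h v \<noteq> 0"
    using pos by (metis (mono_tags, lifting) less_irrefl mult_zero_right power_zero_numeral sum.neutral)
  then have "0 < w v * \<bar>h v\<bar>"
    using w by simp
  also have "\<dots> \<le> (\<Sum>v\<in>A. w v * \<bar>h v\<bar>)"
    using w by (intro member_le_sum[OF v(1)] mult_nonneg_nonneg) (auto simp: fin less_imp_le)
  finally show ?thesis .
qed

lemma median_shift:
  assumes G: "closed_graph G" and ne: "verts G \<noteq> {}" and mean: "(\<Sum>v\<in>verts G. vmeas G v * x v) = 0"
  obtains h where "2 * (\<Sum>v\<in>{v\<in>verts G. h v > 0}. vmeas G v) \<le> (\<Sum>v\<in>verts G. vmeas G v)"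
    and "2 * (\<Sum>v\<in>{v\<in>verts G. h v < 0}. vmeas G v) \<le> (\<Sum>v\<in>verts G. vmeas G v)"
    and "(\<Sum>v\<in>verts G. vmeas G v * \<bar>h v\<bar>) \<le> (\<Sum>v\<in>verts G. vmeas G v * \<bar>x v\<bar>)"
    and "(\<Sum>v\<in>verts G. vmeas G v * (x v)\<^sup>2) \<le> (\<Sum>v\<in>verts G. vmeas G v * (h v)\<^sup>2)"
    and "discrete_energy G h = discrete_energy G x"
proof -
  have finV: "finite (verts G)" and V: "\<And>v. v \<in> verts G \<Longrightarrow> 0 \<le> vmeas G v"
    using G by (auto simp: closed_graph_def less_imp_le)
  obtain c where above: "2 * (\<Sum>v\<in>{v\<in>verts G. x v > c}. vmeas G v) \<le> (\<Sum>v\<in>verts G. vmeas G v)"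
    and below: "2 * (\<Sum>v\<in>{v\<in>verts G. x v < c}. vmeas G v) \<le> (\<Sum>v\<in>verts G. vmeas G v)"
    using weighted_median_exists[where w="vmeas G" and x=x, OF finV ne V] by blast
  show ?thesis
  proof (rule that[of "\<lambda>v. x v - c"])
    show "(\<Sum>v\<in>verts G. vmeas G v * \<bar>x v - c\<bar>) \<le> (\<Sum>v\<in>verts G. vmeas G v * \<bar>x v\<bar>)"
      by (rule weighted_abs_dev_median_le[OF finV V above below])
    show "(\<Sum>v\<in>verts G. vmeas G v * (x v)\<^sup>2) \<le> (\<Sum>v\<in>verts G. vmeas G v * (x v - c)\<^sup>2)"
      by (rule weighted_sq_dev_ge_of_mean_zero[OF V mean])
  qed (use above below in \<open>simp_all add: discrete_energy_def\<close>)
qed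

lemma discrete_nash_product_form:
  assumes G: "closed_graph G" and \<nu>: "\<nu> > 1" and K: "0 \<le> iso_const G \<nu>"
    and mean: "(\<Sum>v\<in>verts G. vmeas G v * x v) = 0"
  shows "iso_const G \<nu> * (\<Sum>v\<in>verts G. vmeas G v * (x v)\<^sup>2) powr (1/2 + 1/\<nu>)
    \<le> 2 * sqrt (rho_sup G) * sqrt (discrete_energy G x) * (\<Sum>v\<in>verts G. vmeas G v * \<bar>x v\<bar>) powr (2/\<nu>)"
proof (cases "verts G = {}")
  case True
  then show ?thesis
    by simp
next
  case False
  obtain h where above: "2 * (\<Sum>v\<in>{v\<in>verts G. h v > 0}. vmeas G v) \<le> (\<Sum>v\<in>verts G. vmeas G v)"
    and below: "2 * (\<Sum>v\<in>{v\<in>verts G. h v < 0}. vmeas G v) \<le> (\<Sum>v\<in>verts G. vmeas G v)"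
    and L1: "(\<Sum>v\<in>verts G. vmeas G v * \<bar>h v\<bar>) \<le> (\<Sum>v\<in>verts G. vmeas G v * \<bar>x v\<bar>)"
    and L2: "(\<Sum>v\<in>verts G. vmeas G v * (x v)\<^sup>2) \<le> (\<Sum>v\<in>verts G. vmeas G v * (h v)\<^sup>2)"
    and energy: "discrete_energy G h = discrete_energy G x"
    using median_shift[OF G False mean] by blast
  have V: "\<And>v. v \<in> verts G \<Longrightarrow> 0 \<le> vmeas G v"
    using G by (auto simp: closed_graph_def less_imp_le)
  have "iso_const G \<nu> * (\<Sum>v\<in>verts G. vmeas G v * (x v)\<^sup>2) powr (1/2 + 1/\<nu>)
      \<le> iso_const G \<nu> * (\<Sum>v\<in>verts G. vmeas G v * (h v)\<^sup>2) powr (1/2 + 1/\<nu>)"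
    using K L2 \<nu> V by (intro mult_left_mono powr_mono2) (auto intro: sum_nonneg)
  also have "\<dots> \<le> 2 * sqrt (rho_sup G) * sqrt (discrete_energy G x) * (\<Sum>v\<in>verts G. vmeas G v * \<bar>h v\<bar>) powr (2/\<nu>)"
    using discrete_nash_median_zero[OF G \<nu> K above below] energy by simp
  also have "\<dots> \<le> 2 * sqrt (rho_sup G) * sqrt (discrete_energy G x) * (\<Sum>v\<in>verts G. vmeas G v * \<bar>x v\<bar>) powr (2/\<nu>)"
    using L1 \<nu> V rho_sup_nonneg[OF G False] discrete_energy_nonneg[OF G]
    by (intro mult_left_mono powr_mono2) (auto intro: sum_nonneg)
  finally show ?thesis .
qed

lemma discrete_nash_inequality:
  assumes G: "closed_graph G" and \<nu>: "\<nu> > 1" and mean: "(\<Sum>v\<in>verts G. vmeas G v * x v) = 0"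
  shows "(iso_const G \<nu> * rho_sup G powr (-1/2) / 2) * (\<Sum>v\<in>verts G. vmeas G v * (x v)\<^sup>2) powr (1/2 + 1/\<nu>)
      * (\<Sum>v\<in>verts G. vmeas G v * \<bar>x v\<bar>) powr (-2/\<nu>)
    \<le> sqrt (discrete_energy G x)"
proof -
  define K where "K = iso_const G \<nu>"
  define \<rho> where "\<rho> = rho_sup G"
  define Q where "Q = discrete_energy G x"
  define X1 where "X1 = (\<Sum>v\<in>verts G. vmeas G v * \<bar>x v\<bar>)"
  define X2 where "X2 = (\<Sum>v\<in>verts G. vmeas G v * (x v)\<^sup>2)"
  define a where "a = 1/2 + 1/\<nu>"
  have V: "\<And>v. v \<in> verts G \<Longrightarrow> 0 < vmeas G v"
    using G by (auto simp: closed_graph_def)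
  have "0 \<le> Q"
    unfolding Q_def by (rule discrete_energy_nonneg[OF G])
  have "0 \<le> X2"
    unfolding X2_def using V by (simp add: sum_nonneg less_imp_le)
  have "\<rho> \<ge> 0" if "X2 > 0"
  proof -
    have "verts G \<noteq> {}"
      using that by (auto simp: X2_def)
    then show ?thesis
      unfolding \<rho>_def by (rule rho_sup_nonneg[OF G])
  qed
  \<comment> \<open>iso_const is an Inf over a possibly empty set, so its sign is not known\<close>
  then consider "X2 = 0" | "K \<le> 0" | "\<rho> = 0" | "X2 > 0" "K > 0" "\<rho> > 0"
    using \<open>0 \<le> X2\<close> by fastforce
  then have "(K * \<rho> powr (-1/2) / 2) * X2 powr a * X1 powr (-2/\<nu>) \<le> sqrt Q"
  proof cases
    case 2
    then have "(K * \<rho> powr (-1/2) / 2) * X2 powr a * X1 powr (-2/\<nu>) \<le> 0"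
      by (intro mult_nonpos_nonneg divide_nonpos_pos mult_nonpos_nonneg) auto
    then show ?thesis
      using \<open>0 \<le> Q\<close> by (meson order_trans real_sqrt_ge_zero)
  next
    case 4
    have "0 < X1"
      unfolding X1_def using G V 4 by (intro weighted_abs_sum_pos) (auto simp: closed_graph_def X2_def)
    have "(K * \<rho> powr (-1/2) / 2) * X2 powr a * X1 powr (-2/\<nu>) = (K * X2 powr a) / (2 * sqrt \<rho> * X1 powr (2/\<nu>))"
      using 4 by (simp add: powr_minus powr_half_sqrt divide_simps)
    also have "\<dots> \<le> sqrt Q"
      using discrete_nash_product_form[OF G \<nu> _ mean] 4 \<open>0 < X1\<close>
      by (simp add: divide_le_eq K_def \<rho>_def Q_def X1_def X2_def a_def mult_ac)
    finally show ?thesis .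
  qed (use \<open>0 \<le> Q\<close> in \<open>auto simp: a_def\<close>)
  then show ?thesis
    unfolding K_def \<rho>_def Q_def X1_def X2_def a_def .
qed

lemma vnorm_two_powr:
  assumes "closed_graph G"
  shows "vnorm G 2 f powr p = (\<Sum>v\<in>verts G. vmeas G v * (f (Vtx v))\<^sup>2) powr (p / 2)"
proof -
  have "\<bar>y\<bar> powr 2 = y\<^sup>2" for y :: real
    by (cases "y = 0") simp_all
  moreover have "0 \<le> (\<Sum>v\<in>verts G. vmeas G v * (f (Vtx v))\<^sup>2)"
    using assms by (intro sum_nonneg) (auto simp: closed_graph_def less_imp_le)
  ultimately show ?thesis
    by (simp add: vnorm_def powr_powr)
qed

lemma vnorm_one:
  assumes "closed_graph G"
  shows "vnorm G 1 f = (\<Sum>v\<in>verts G. vmeas G v * \<bar>f (Vtx v)\<bar>)"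
  using assms by (simp add: vnorm_def closed_graph_def sum_nonneg less_imp_le)

theorem mainTheorem9:
  fixes G :: "('v, 'e) cgraph" and \<nu> :: real and f :: "('v, 'e) gpoint \<Rightarrow> real"
  assumes "closed_graph G" and "\<nu> > 2" and "C1_Dir G f"
    and "(\<Sum>v\<in>verts G. vmeas G v * f (Vtx v)) = 0"
  shows "grad_norm2 G f \<ge>
    (iso_const G \<nu> * rho_sup G powr (-1/2) / 2) * vnorm G 2 f powr (1 + 2 / \<nu>) * vnorm G 1 f powr (-2 / \<nu>)"
proof -
  \<comment> \<open>the argument only needs \<nu> > 1\<close>
  have "\<nu> > 1" and exponent: "(1 + 2 / \<nu>) / 2 = 1/2 + 1/\<nu>"
    using \<open>\<nu> > 2\<close> by (simp_all add: field_simps)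
  have "(iso_const G \<nu> * rho_sup G powr (-1/2) / 2) * vnorm G 2 f powr (1 + 2 / \<nu>) * vnorm G 1 f powr (-2 / \<nu>)
      \<le> sqrt (discrete_energy G (\<lambda>v. f (Vtx v)))"
    unfolding vnorm_two_powr[OF assms(1)] vnorm_one[OF assms(1)] exponent
    by (rule discrete_nash_inequality[OF assms(1) \<open>\<nu> > 1\<close> assms(4)])
  also have "\<dots> \<le> grad_norm2 G f"
    using assms(1,3) by (rule discrete_energy_le_grad_norm2)
  finally show ?thesis .
qed

end
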